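(* Let $G=(V,E)$ be a finite perfect graph with vertex cost function $w:V\to\mathbb{Q}_+$, and consider the investment management game on $G$ (defined in the context). A function $y:\mathcal{M}\to\mathbb{Q}_+$ on the set $\mathcal{M}$ of maximal cliques of $G$ is a core imputation of this game if and only if $y$ is an optimal solution of the linear program $$ \text{minimize } \sum_{Q\in\mathcal{M}} y_Q \quad\text{subject to}\quad \sum_{Q\in\mathcal{M}:\, v\in Q} y_Q \ge w_v \ \ \forall v\in V,\qquad y_Q\ge 0\ \ \forall Q\in\mathcal{M}. $$
   Context: A graph $G$ is perfect if for every $S\subseteq V$ the induced subgraph $G(S)$ satisfies $\omega(G(S))=\chi(G(S))$ (clique number equals chromatic number). A stable (independent) set is a set of pairwise non-adjacent vertices. The investment management game on $G$ with costs $w$: vertices are assets, and each maximal clique of $G$ is an investment firm; $\mathcal{M}$ denotes the set of maximal cliques. Every subset $S\subseteq V$ is a scenario, and $\mathrm{cost}(S)$ is the maximum of $\sum_{v\in I} w_v$ over stable sets $I$ of the induced subgraph $G(S)$. The total money is $T=\mathrm{cost}(V)$. An imputation is a function $y:\mathcal{M}\to\mathbb{Q}_+$ with $\sum_{Q\in\mathcal{M}} y_Q = T$. For a scenario $S$, $\mathrm{money}(S)=\sum_{Q\in\mathcal{M}:\, Q\cap S\neq\emptyset} y_Q$. An imputation $y$ is in the core (is a core imputation) if $\mathrm{money}(S)\ge \mathrm{cost}(S)$ for every $S\subseteq V$. *)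

theory Defs
  imports Complex_Main
begin

text \<open>A finite simple graph: finite vertex set V and a symmetric, irreflexive
adjacency relation E (only its restriction to V matters).\<close>

definition graph :: "'a set \<Rightarrow> ('a \<Rightarrow> 'a \<Rightarrow> bool) \<Rightarrow> bool" where
  "graph V E \<longleftrightarrow> finite V \<and> (\<forall>u\<in>V. \<forall>v\<in>V. E u v \<longrightarrow> E v u) \<and> (\<forall>v\<in>V. \<not> E v v)"

definition clique :: "'a set \<Rightarrow> ('a \<Rightarrow> 'a \<Rightarrow> bool) \<Rightarrow> 'a set \<Rightarrow> bool" where
  "clique V E Q \<longleftrightarrow> Q \<subseteq> V \<and> (\<forall>u\<in>Q. \<forall>v\<in>Q. u \<noteq> v \<longrightarrow> E u v)"

definition maximal_cliques :: "'a set \<Rightarrow> ('a \<Rightarrow> 'a \<Rightarrow> bool) \<Rightarrow> 'a set set" where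
  "maximal_cliques V E = {Q. clique V E Q \<and> (\<forall>Q'. clique V E Q' \<and> Q \<subseteq> Q' \<longrightarrow> Q' = Q)}"

definition stable_set :: "'a set \<Rightarrow> ('a \<Rightarrow> 'a \<Rightarrow> bool) \<Rightarrow> 'a set \<Rightarrow> bool" where
  "stable_set S E I \<longleftrightarrow> I \<subseteq> S \<and> (\<forall>u\<in>I. \<forall>v\<in>I. \<not> E u v)"

definition clique_number :: "'a set \<Rightarrow> ('a \<Rightarrow> 'a \<Rightarrow> bool) \<Rightarrow> nat" where
  "clique_number S E = Max {card Q | Q. clique S E Q}"

definition chromatic_number :: "'a set \<Rightarrow> ('a \<Rightarrow> 'a \<Rightarrow> bool) \<Rightarrow> nat" where
  "chromatic_number S E = (LEAST k. \<exists>c :: 'a \<Rightarrow> nat.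
      (\<forall>v\<in>S. c v < k) \<and> (\<forall>u\<in>S. \<forall>v\<in>S. E u v \<longrightarrow> c u \<noteq> c v))"

definition perfect :: "'a set \<Rightarrow> ('a \<Rightarrow> 'a \<Rightarrow> bool) \<Rightarrow> bool" where
  "perfect V E \<longleftrightarrow> (\<forall>S\<subseteq>V. clique_number S E = chromatic_number S E)"

definition cost :: "('a \<Rightarrow> 'a \<Rightarrow> bool) \<Rightarrow> ('a \<Rightarrow> rat) \<Rightarrow> 'a set \<Rightarrow> rat" where
  "cost E w S = Max {sum w I | I. stable_set S E I}"

definition money :: "'a set \<Rightarrow> ('a \<Rightarrow> 'a \<Rightarrow> bool) \<Rightarrow> ('a set \<Rightarrow> rat) \<Rightarrow> 'a set \<Rightarrow> rat" where
  "money V E y S = sum y {Q \<in> maximal_cliques V E. Q \<inter> S \<noteq> {}}"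

definition imputation :: "'a set \<Rightarrow> ('a \<Rightarrow> 'a \<Rightarrow> bool) \<Rightarrow> ('a \<Rightarrow> rat) \<Rightarrow> ('a set \<Rightarrow> rat) \<Rightarrow> bool" where
  "imputation V E w y \<longleftrightarrow> (\<forall>Q\<in>maximal_cliques V E. y Q \<ge> 0)
      \<and> sum y (maximal_cliques V E) = cost E w V"

definition core_imputation :: "'a set \<Rightarrow> ('a \<Rightarrow> 'a \<Rightarrow> bool) \<Rightarrow> ('a \<Rightarrow> rat) \<Rightarrow> ('a set \<Rightarrow> rat) \<Rightarrow> bool" where
  "core_imputation V E w y \<longleftrightarrow> imputation V E w y
      \<and> (\<forall>S\<subseteq>V. money V E y S \<ge> cost E w S)"

definition lp_feasible :: "'a set \<Rightarrow> ('a \<Rightarrow> 'a \<Rightarrow> bool) \<Rightarrow> ('a \<Rightarrow> rat) \<Rightarrow> ('a set \<Rightarrow> rat) \<Rightarrow> bool" where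
  "lp_feasible V E w y \<longleftrightarrow> (\<forall>Q\<in>maximal_cliques V E. y Q \<ge> 0)
      \<and> (\<forall>v\<in>V. sum y {Q \<in> maximal_cliques V E. v \<in> Q} \<ge> w v)"

definition lp_optimal :: "'a set \<Rightarrow> ('a \<Rightarrow> 'a \<Rightarrow> bool) \<Rightarrow> ('a \<Rightarrow> rat) \<Rightarrow> ('a set \<Rightarrow> rat) \<Rightarrow> bool" where
  "lp_optimal V E w y \<longleftrightarrow> lp_feasible V E w y
      \<and> (\<forall>y'. lp_feasible V E w y' \<longrightarrow> sum y (maximal_cliques V E) \<le> sum y' (maximal_cliques V E))"

end

theory Submission
  imports Defs
begin

text \<open>A core imputation pays every singleton scenario \<open>{v}\<close> at least \<open>w v\<close>, so it is a
  feasible solution of the LP. Conversely, a feasible \<open>y\<close> pays every scenario \<open>S\<close> at least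
  \<open>w(I)\<close> for each stable \<open>I \<subseteq> S\<close>, because distinct vertices of \<open>I\<close> lie in disjoint sets of
  maximal cliques. So the core consists of the feasible solutions of value \<open>cost V\<close>, and these
  are the optimal ones once the LP optimum is shown to be at most \<open>cost V\<close>.

  This is where perfection enters. Clearing denominators, replace every vertex \<open>v\<close> by
  \<open>d \<cdot> w v\<close> pairwise non-adjacent copies. The new graph is still perfect, so by Lovasz's
  argument (replicating a vertex into a clique preserves perfection, hence some clique meets
  every maximum stable set) it is covered by \<open>\<alpha>\<close> cliques, while \<open>\<alpha> \<le> d \<cdot> cost V\<close>.
  Extending the projected cliques to maximal ones and giving each weight \<open>1 / d\<close> yields a
  feasible solution of value at most \<open>cost V\<close>.\<close>

section \<open>Cliques, stable sets and colourings\<close>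

definition colourable :: "'b set \<Rightarrow> ('b \<Rightarrow> 'b \<Rightarrow> bool) \<Rightarrow> nat \<Rightarrow> bool" where
  "colourable S E k \<longleftrightarrow>
     (\<exists>c::'b \<Rightarrow> nat. (\<forall>v\<in>S. c v < k) \<and> (\<forall>u\<in>S. \<forall>v\<in>S. E u v \<longrightarrow> c u \<noteq> c v))"

definition omega_colourable :: "'b set \<Rightarrow> ('b \<Rightarrow> 'b \<Rightarrow> bool) \<Rightarrow> bool" where
  "omega_colourable V E \<longleftrightarrow>
     (\<forall>S\<subseteq>V. \<forall>k. (\<forall>K. clique S E K \<longrightarrow> card K \<le> k) \<longrightarrow> colourable S E k)"

definition stability_number :: "'b set \<Rightarrow> ('b \<Rightarrow> 'b \<Rightarrow> bool) \<Rightarrow> nat" where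
  "stability_number S E = Max {card I | I. stable_set S E I}"

lemma graph_subset: "graph V E \<Longrightarrow> S \<subseteq> V \<Longrightarrow> graph S E"
  by (auto simp: graph_def intro: finite_subset)

lemma clique_subset: "clique S E K \<Longrightarrow> S \<subseteq> T \<Longrightarrow> clique T E K"
  by (auto simp: clique_def)

lemma finite_cliques: "finite S \<Longrightarrow> finite {K. clique S E K}"
  by (rule finite_subset[of _ "Pow S"]) (auto simp: clique_def)

lemma finite_stable_sets: "finite S \<Longrightarrow> finite {I. stable_set S E I}"
  by (rule finite_subset[of _ "Pow S"]) (auto simp: stable_set_def)

lemma finite_maximal_cliques: "finite V \<Longrightarrow> finite (maximal_cliques V E)"
  by (rule finite_subset[OF _ finite_cliques[of V E]]) (auto simp: maximal_cliques_def)

lemma clique_extends_to_maximal_clique: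
  assumes "finite V" "clique V E K"
  obtains Q where "Q \<in> maximal_cliques V E" "K \<subseteq> Q"
proof -
  let ?A = "{Q. clique V E Q \<and> K \<subseteq> Q}"
  have "finite ?A"
    using finite_cliques[OF assms(1)] by (rule finite_subset[rotated]) auto
  moreover have "?A \<noteq> {}" using assms(2) by auto
  ultimately obtain Q where Q: "Q \<in> ?A" "\<forall>Q'\<in>?A. Q \<subseteq> Q' \<longrightarrow> Q = Q'"
    using finite_has_maximal[of ?A] by (auto simp del: Collect_empty_eq)
  then have "Q \<in> maximal_cliques V E"
    unfolding maximal_cliques_def by (auto intro: subset_trans)
  then show thesis using that Q(1) by blast
qed

lemma clique_image:
  assumes "clique W F C" "\<pi> ` W \<subseteq> V"
    and edges: "\<And>a b. a \<in> W \<Longrightarrow> b \<in> W \<Longrightarrow> F a b \<Longrightarrow> \<pi> a \<noteq> \<pi> b \<Longrightarrow> E (\<pi> a) (\<pi> b)"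
  shows "clique V E (\<pi> ` C)"
  unfolding clique_def
proof (intro conjI ballI impI)
  have CW: "C \<subseteq> W" using assms(1) by (simp add: clique_def)
  then show "\<pi> ` C \<subseteq> V" using assms(2) by blast
  fix p q assume "p \<in> \<pi> ` C" "q \<in> \<pi> ` C" "p \<noteq> q"
  then obtain a b where ab: "a \<in> C" "b \<in> C" "p = \<pi> a" "q = \<pi> b" "a \<noteq> b" by blast
  then have "F a b" using assms(1) by (simp add: clique_def)
  then show "E p q" using edges CW ab \<open>p \<noteq> q\<close> by blast
qed

lemma clique_lift:
  assumes K: "clique (\<pi> ` S) E K"
    and edges: "\<And>a b. a \<in> S \<Longrightarrow> b \<in> S \<Longrightarrow> \<pi> a \<noteq> \<pi> b \<Longrightarrow> E (\<pi> a) (\<pi> b) \<Longrightarrow> F a b"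
  obtains C where "clique S F C" "card C = card K"
proof
  have KS: "K \<subseteq> \<pi> ` S" using K by (simp add: clique_def)
  let ?C = "inv_into S \<pi> ` K"
  show "clique S F ?C"
    unfolding clique_def
  proof (intro conjI ballI impI)
    show "?C \<subseteq> S" using KS by (auto intro: inv_into_into)
    fix a b assume "a \<in> ?C" "b \<in> ?C" "a \<noteq> b"
    then obtain p q where pq: "p \<in> K" "q \<in> K" "a = inv_into S \<pi> p" "b = inv_into S \<pi> q"
      by blast
    then have \<pi>ab: "\<pi> a = p" "\<pi> b = q"
      using KS by (simp_all add: f_inv_into_f subset_eq)
    have "a \<in> S" "b \<in> S"
      using pq KS by (metis inv_into_into subsetD)+
    moreover have "p \<noteq> q" using pq \<open>a \<noteq> b\<close> by blast
    moreover from this have "E p q" using K pq(1,2) unfolding clique_def by blast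
    ultimately show "F a b" using edges \<pi>ab by blast
  qed
  show "card ?C = card K"
    using KS by (auto intro: card_image inj_on_inv_into)
qed

lemma stable_weight_le_cost: "finite S \<Longrightarrow> stable_set S E I \<Longrightarrow> sum w I \<le> cost E w S"
  unfolding cost_def by (rule Max_ge) (auto simp: finite_stable_sets)

lemma maximum_weight_stable_set:
  assumes "finite S"
  obtains I where "stable_set S E I" "cost E w S = sum w I"
proof -
  have "stable_set S E {}" by (simp add: stable_set_def)
  then have "cost E w S \<in> {sum w I | I. stable_set S E I}"
    unfolding cost_def using assms by (intro Max_in) (auto simp: finite_stable_sets)
  then show thesis using that by auto
qed

lemma card_le_stability_number:
  "finite S \<Longrightarrow> stable_set S E I \<Longrightarrow> card I \<le> stability_number S E"
  unfolding stability_number_def by (rule Max_ge) (auto simp: finite_stable_sets)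

lemma stability_number_leI:
  assumes "finite S" "\<And>I. stable_set S E I \<Longrightarrow> card I \<le> n"
  shows "stability_number S E \<le> n"
proof -
  have "stable_set S E {}" by (simp add: stable_set_def)
  then show ?thesis
    unfolding stability_number_def using assms
    by (subst Max_le_iff) (auto simp: finite_stable_sets)
qed

lemma maximum_stable_set:
  assumes "finite S"
  obtains I where "stable_set S E I" "card I = stability_number S E"
proof -
  have "stable_set S E {}" by (simp add: stable_set_def)
  then have "stability_number S E \<in> {card I | I. stable_set S E I}"
    unfolding stability_number_def using assms by (intro Max_in) (auto simp: finite_stable_sets)
  then show thesis using that by auto
qed

lemma colouring_inj_on_clique:
  assumes "\<forall>u\<in>S. \<forall>v\<in>S. E u v \<longrightarrow> c u \<noteq> c v" "clique S E K"
  shows "inj_on c K"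
proof (rule inj_onI, rule ccontr)
  fix u v assume "u \<in> K" "v \<in> K" "c u = c v" "u \<noteq> v"
  then show False using assms unfolding clique_def by blast
qed

lemma colourable_mono: "colourable S E k \<Longrightarrow> k \<le> l \<Longrightarrow> colourable S E l"
  unfolding colourable_def using order_less_le_trans by blast

lemma colourable_Un_stable_set:
  assumes "colourable S E k" "stable_set T E T"
  shows "colourable (S \<union> T) E (Suc k)"
proof -
  obtain c where c: "\<forall>v\<in>S. c v < k" "\<forall>u\<in>S. \<forall>v\<in>S. E u v \<longrightarrow> c u \<noteq> c v"
    using assms(1) unfolding colourable_def by blast
  define c' where "c' v = (if v \<in> S then c v else k)" for v
  have "\<forall>v\<in>S \<union> T. c' v < Suc k"
    using c(1) by (auto simp: c'_def)
  moreover have "c' u \<noteq> c' v" if "u \<in> S \<union> T" "v \<in> S \<union> T" "E u v" for u v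
  proof (cases "u \<in> S"; cases "v \<in> S")
    assume "u \<notin> S" "v \<notin> S"
    then show ?thesis using that assms(2) by (auto simp: stable_set_def)
  qed (use that c in \<open>auto simp: c'_def\<close>)
  ultimately show ?thesis unfolding colourable_def by blast
qed

lemma colourable_chromatic_number:
  assumes "graph S E"
  shows "colourable S E (chromatic_number S E)"
proof -
  have "finite S" "\<forall>v\<in>S. \<not> E v v" using assms by (auto simp: graph_def)
  obtain c :: "_ \<Rightarrow> nat" and n where c: "c ` S = {i. i < n}" "inj_on c S"
    using finite_imp_inj_to_nat_seg[OF \<open>finite S\<close>] by blast
  have "\<forall>v\<in>S. c v < n" using c(1) by blast
  moreover have "\<forall>u\<in>S. \<forall>v\<in>S. E u v \<longrightarrow> c u \<noteq> c v"
    using c(2) \<open>\<forall>v\<in>S. \<not> E v v\<close> by (metis inj_onD)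
  ultimately have "colourable S E n" unfolding colourable_def by blast
  then show ?thesis
    unfolding chromatic_number_def colourable_def by (rule LeastI_ex[OF exI])
qed

lemma omega_colourable_subset: "omega_colourable V E \<Longrightarrow> S \<subseteq> V \<Longrightarrow> omega_colourable S E"
  unfolding omega_colourable_def by blast

lemma omega_colourableD:
  "omega_colourable V E \<Longrightarrow> (\<And>K. clique V E K \<Longrightarrow> card K \<le> k) \<Longrightarrow> colourable V E k"
  unfolding omega_colourable_def by blast

lemma perfect_imp_omega_colourable:
  assumes "graph V E" "perfect V E"
  shows "omega_colourable V E"
  unfolding omega_colourable_def
proof (intro allI impI)
  fix S k assume S: "S \<subseteq> V" and bound: "\<forall>K. clique S E K \<longrightarrow> card K \<le> k"
  have S_graph: "graph S E" using assms(1) S by (rule graph_subset)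
  then have "finite {card K | K. clique S E K}"
    using finite_cliques[of S E] by (simp add: graph_def setcompr_eq_image)
  moreover have "clique S E {}" by (simp add: clique_def)
  ultimately have "clique_number S E \<le> k"
    using bound unfolding clique_number_def by (subst Max_le_iff) blast+
  then have "chromatic_number S E \<le> k"
    using assms(2) S by (simp add: perfect_def)
  then show "colourable S E k"
    using colourable_chromatic_number[OF S_graph] colourable_mono by blast
qed

lemma omega_colourable_pullback:
  assumes "omega_colourable V E" "\<pi> ` W \<subseteq> V"
    and edges: "\<And>a b. a \<in> W \<Longrightarrow> b \<in> W \<Longrightarrow> F a b \<longleftrightarrow> \<pi> a \<noteq> \<pi> b \<and> E (\<pi> a) (\<pi> b)"
  shows "omega_colourable W F"
  unfolding omega_colourable_def
proof (intro allI impI)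
  fix S k assume S: "S \<subseteq> W" and bound: "\<forall>C. clique S F C \<longrightarrow> card C \<le> k"
  have lift: "F a b" if "a \<in> S" "b \<in> S" "\<pi> a \<noteq> \<pi> b" "E (\<pi> a) (\<pi> b)" for a b
    using that S edges by blast
  have "card K \<le> k" if K: "clique (\<pi> ` S) E K" for K
  proof -
    obtain C where "clique S F C" "card C = card K"
      by (rule clique_lift[OF K lift])
    then show ?thesis using bound by auto
  qed
  moreover have "\<pi> ` S \<subseteq> V" using S assms(2) by blast
  ultimately obtain c where
    c: "\<forall>p\<in>\<pi> ` S. c p < k" "\<forall>p\<in>\<pi> ` S. \<forall>q\<in>\<pi> ` S. E p q \<longrightarrow> c p \<noteq> c q"
    using assms(1) unfolding omega_colourable_def colourable_def by blast
  have "\<forall>a\<in>S. \<forall>b\<in>S. F a b \<longrightarrow> c (\<pi> a) \<noteq> c (\<pi> b)"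
    using c(2) S edges by blast
  then show "colourable S F k"
    unfolding colourable_def using c(1) by (intro exI[of _ "c \<circ> \<pi>"]) auto
qed

section \<open>Lovasz's replication lemma\<close>

text \<open>Every vertex \<open>a\<close> is replaced by the fibre of \<open>\<pi>\<close> over \<open>a\<close>, whose elements become
  pairwise adjacent twins.\<close>

definition replication :: "('b \<Rightarrow> 'a) \<Rightarrow> ('a \<Rightarrow> 'a \<Rightarrow> bool) \<Rightarrow> 'b \<Rightarrow> 'b \<Rightarrow> bool" where
  "replication \<pi> E x y \<longleftrightarrow> x \<noteq> y \<and> (\<pi> x = \<pi> y \<or> E (\<pi> x) (\<pi> y))"

lemma graph_replication:
  assumes "graph V E" "finite W" "\<pi> ` W \<subseteq> V"
  shows "graph W (replication \<pi> E)"
proof -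
  have "E (\<pi> v) (\<pi> u)" if "u \<in> W" "v \<in> W" "E (\<pi> u) (\<pi> v)" for u v
    using that assms(1,3) unfolding graph_def by blast
  then show ?thesis
    using assms(2) unfolding graph_def replication_def by metis
qed

lemma clique_insert_twin:
  assumes "graph W F" "x' \<in> W" "F x x'"
    and twins: "\<forall>u\<in>W - {x, x'}. F x u \<longleftrightarrow> F x' u"
    and K: "clique W F K" "x \<in> K"
  shows "clique W F (insert x' K)"
proof -
  have sym: "\<forall>u\<in>W. \<forall>v\<in>W. F u v \<longrightarrow> F v u" using assms(1) by (simp add: graph_def)
  have KW: "K \<subseteq> W" using K(1) by (simp add: clique_def)
  have x'_adj: "F x' u \<and> F u x'" if "u \<in> K" "u \<noteq> x'" for u
  proof (cases "u = x")
    case True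
    have "x \<in> W" using K(2) KW by blast
    then show ?thesis using True assms(3) sym[rule_format, OF _ assms(2) assms(3)] by simp
  next
    case False
    then have "F x u" using K(1) K(2) that(1) unfolding clique_def by simp
    moreover have "u \<in> W" using that KW by blast
    ultimately have "F x' u" using twins that False by blast
    then show ?thesis using sym[rule_format, OF assms(2) \<open>u \<in> W\<close>] by blast
  qed
  show ?thesis
    unfolding clique_def
  proof (intro conjI ballI impI)
    show "insert x' K \<subseteq> W" using KW assms(2) by blast
    fix a b assume "a \<in> insert x' K" "b \<in> insert x' K" "a \<noteq> b"
    then show "F a b" using x'_adj K(1) unfolding clique_def by blast
  qed
qed

lemma twin_colour_class_stable:
  assumes "graph W F" "x \<in> W" "x' \<in> W" "x \<noteq> x'"
    and twins: "\<forall>u\<in>W - {x, x'}. F x u \<longleftrightarrow> F x' u"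
    and c: "\<forall>u\<in>W - {x'}. \<forall>v\<in>W - {x'}. F u v \<longrightarrow> c u \<noteq> c v"
  defines "A \<equiv> {u \<in> W - {x'}. c u = c x} - {x}"
  shows "stable_set (insert x' A) F (insert x' A)"
proof -
  have sym: "\<forall>u\<in>W. \<forall>v\<in>W. F u v \<longrightarrow> F v u" using assms(1) by (simp add: graph_def)
  have x: "x \<in> W - {x'}" using assms(2,4) by simp
  have "\<not> F x' x'" using assms(1,3) by (simp add: graph_def)
  moreover have "\<not> F x' u \<and> \<not> F u x'" if "u \<in> A" for u
  proof -
    have u: "u \<in> W - {x, x'}" "u \<in> W - {x'}" "c u = c x" using that by (auto simp: A_def)
    then have "\<not> F x u" using c x by metis
    then have "\<not> F x' u" using twins u(1) by blast
    moreover have "u \<in> W" using u(1) by blast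
    ultimately show ?thesis using sym[rule_format, OF \<open>u \<in> W\<close> assms(3)] by blast
  qed
  moreover have "\<not> F u v" if "u \<in> A" "v \<in> A" for u v
  proof -
    have "u \<in> W - {x'}" "v \<in> W - {x'}" "c u = c v" using that by (auto simp: A_def)
    then show ?thesis using c by blast
  qed
  ultimately show ?thesis by (auto simp: stable_set_def)
qed

text \<open>A \<open>k\<close>-clique of \<open>W - {x'}\<close> through \<open>x\<close> would extend by \<open>x'\<close> to a \<open>(k + 1)\<close>-clique of
  \<open>W\<close>; one avoiding \<open>x\<close> and its colour class would need \<open>k\<close> colours other than \<open>c x\<close>.\<close>

lemma card_clique_avoiding_twin_colour_class:
  assumes "graph W F" "x \<in> W" "x' \<in> W" "x \<noteq> x'" "F x x'"
    and twins: "\<forall>u\<in>W - {x, x'}. F x u \<longleftrightarrow> F x' u"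
    and c: "\<forall>v\<in>W - {x'}. c v < k" "\<forall>u\<in>W - {x'}. \<forall>v\<in>W - {x'}. F u v \<longrightarrow> c u \<noteq> c v"
    and bound: "\<And>K. clique W F K \<Longrightarrow> card K \<le> k"
    and K: "clique (W - {x'} - ({u \<in> W - {x'}. c u = c x} - {x})) F K"
  shows "card K \<le> k - 1"
proof -
  have K0: "clique (W - {x'}) F K" using K by (rule clique_subset) auto
  show ?thesis
  proof (cases "x \<in> K")
    case True
    have "clique W F (insert x' K)"
      using clique_subset[OF K0] clique_insert_twin[OF assms(1,3,5) twins _ True] by blast
    moreover have "x' \<notin> K" "finite K"
      using K0 \<open>graph W F\<close> by (auto simp: clique_def graph_def intro: finite_subset)
    ultimately show ?thesis using bound by fastforce
  next
    case False
    have "c ` K \<subseteq> {..<k} - {c x}"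
      using K False c(1) unfolding clique_def by auto
    then have "card (c ` K) \<le> k - 1"
      using card_mono[of "{..<k} - {c x}"] c(1) assms(2,4) by (simp add: card_Diff_singleton_if)
    then show ?thesis
      using colouring_inj_on_clique[OF c(2) K0] by (simp add: card_image)
  qed
qed

lemma colourable_with_twin:
  assumes "graph W F" "x \<in> W" "x' \<in> W" "x \<noteq> x'" "F x x'"
    and twins: "\<forall>u\<in>W - {x, x'}. F x u \<longleftrightarrow> F x' u"
    and IH: "omega_colourable (W - {x'}) F"
    and bound: "\<And>K. clique W F K \<Longrightarrow> card K \<le> k"
  shows "colourable W F k"
proof -
  have "clique W F {x}" using assms(2) by (simp add: clique_def)
  then have "1 \<le> k" using bound by fastforce
  have "colourable (W - {x'}) F k"
    using IH by (rule omega_colourableD) (auto intro: bound clique_subset)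
  then obtain c where c: "\<forall>v\<in>W - {x'}. c v < k"
    "\<forall>u\<in>W - {x'}. \<forall>v\<in>W - {x'}. F u v \<longrightarrow> c u \<noteq> c v"
    unfolding colourable_def by blast
  define A where "A = {u \<in> W - {x'}. c u = c x} - {x}"
  have "omega_colourable (W - {x'} - A) F"
    using IH by (rule omega_colourable_subset) auto
  then have "colourable (W - {x'} - A) F (k - 1)"
    using card_clique_avoiding_twin_colour_class[OF assms(1-5) twins c bound]
    unfolding A_def by (rule omega_colourableD)
  moreover have "stable_set (insert x' A) F (insert x' A)"
    unfolding A_def using assms(1-4) twins c(2) by (rule twin_colour_class_stable)
  ultimately have "colourable ((W - {x'} - A) \<union> insert x' A) F (Suc (k - 1))"
    by (rule colourable_Un_stable_set)
  moreover have "(W - {x'} - A) \<union> insert x' A = W"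
    using assms(3) by (auto simp: A_def)
  ultimately show ?thesis using \<open>1 \<le> k\<close> by simp
qed

lemma colourable_replication:
  assumes "graph V E" "omega_colourable V E" "finite W" "\<pi> ` W \<subseteq> V"
    and "\<And>K. clique W (replication \<pi> E) K \<Longrightarrow> card K \<le> k"
  shows "colourable W (replication \<pi> E) k"
  using assms(3-5)
proof (induction "card W" arbitrary: W k rule: less_induct)
  case less
  let ?F = "replication \<pi> E"
  show ?case
  proof (cases "inj_on \<pi> W")
    case True
    have "omega_colourable W ?F"
      using assms(2) less.prems(2)
      by (rule omega_colourable_pullback) (use True in \<open>auto simp: replication_def inj_on_def\<close>)
    then show ?thesis using less.prems(3) by (rule omega_colourableD)
  next
    case False
    then obtain x x' where x: "x \<in> W" "x' \<in> W" "x \<noteq> x'" "\<pi> x = \<pi> x'"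
      unfolding inj_on_def by blast
    have "omega_colourable (W - {x'}) ?F"
      unfolding omega_colourable_def
    proof (intro allI impI)
      fix S j assume S: "S \<subseteq> W - {x'}" and "\<forall>K. clique S ?F K \<longrightarrow> card K \<le> j"
      moreover have "card S < card W"
        using S x(2) less.prems(1) by (meson card_Diff1_less card_mono finite_Diff le_less_trans)
      moreover have "finite S" "\<pi> ` S \<subseteq> V"
        using S less.prems(1,2) by (auto intro: finite_subset)
      ultimately show "colourable S ?F j" using less.hyps by blast
    qed
    moreover have "graph W ?F" using assms(1) less.prems(1,2) by (rule graph_replication)
    moreover have "?F x x'" "\<forall>u\<in>W - {x, x'}. ?F x u \<longleftrightarrow> ?F x' u"
      using x by (auto simp: replication_def)
    ultimately show ?thesis
      using colourable_with_twin[OF _ x(1-3)] less.prems(3) by simp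
  qed
qed

lemma omega_colourable_replication:
  assumes "graph V E" "omega_colourable V E" "finite W" "\<pi> ` W \<subseteq> V"
  shows "omega_colourable W (replication \<pi> E)"
  unfolding omega_colourable_def
proof (intro allI impI)
  fix S k assume "S \<subseteq> W" "\<forall>K. clique S (replication \<pi> E) K \<longrightarrow> card K \<le> k"
  moreover from \<open>S \<subseteq> W\<close> have "finite S" "\<pi> ` S \<subseteq> V"
    using assms(3,4) by (auto intro: finite_subset)
  ultimately show "colourable S (replication \<pi> E) k"
    using colourable_replication[OF assms(1,2)] by blast
qed

section \<open>Covering a perfect graph by \<open>\<alpha>\<close> cliques\<close>

lemma card_le_colours_mult_stability_number:
  assumes "graph S E" "finite W" "\<pi> ` W \<subseteq> S" "colourable W (replication \<pi> E) k"
  shows "card W \<le> k * stability_number S E"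
proof -
  obtain c where c: "\<forall>v\<in>W. c v < k" "\<forall>u\<in>W. \<forall>v\<in>W. replication \<pi> E u v \<longrightarrow> c u \<noteq> c v"
    using assms(4) unfolding colourable_def by blast
  have colour_class: "card {x\<in>W. c x = j} \<le> stability_number S E" for j
  proof -
    let ?I = "{x\<in>W. c x = j}"
    have same_colour: "\<not> replication \<pi> E a b" if "a \<in> ?I" "b \<in> ?I" for a b
      using that c(2) by (metis (mono_tags, lifting) mem_Collect_eq)
    have "inj_on \<pi> ?I"
      using same_colour by (auto simp: inj_on_def replication_def)
    moreover have "stable_set S E (\<pi> ` ?I)"
      unfolding stable_set_def
    proof (intro conjI ballI)
      show "\<pi> ` ?I \<subseteq> S" using assms(3) by blast
      fix p q assume "p \<in> \<pi> ` ?I" "q \<in> \<pi> ` ?I"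
      then obtain a b where ab: "a \<in> ?I" "b \<in> ?I" "p = \<pi> a" "q = \<pi> b" by blast
      have "\<not> E p p" using ab assms(1,3) by (auto simp: graph_def)
      then show "\<not> E p q"
        using same_colour[OF ab(1,2)] ab(3,4) by (auto simp: replication_def)
    qed
    ultimately show ?thesis
      using assms(1) card_le_stability_number by (fastforce simp: graph_def card_image)
  qed
  have "W = (\<Union>j<k. {x\<in>W. c x = j})" using c(1) by blast
  then have "card W \<le> (\<Sum>j<k. card {x\<in>W. c x = j})"
    by (metis card_UN_le finite_lessThan)
  also have "\<dots> \<le> k * stability_number S E"
    using sum_bounded_above[of "{..<k}", OF colour_class] by simp
  finally show ?thesis .
qed

lemma card_replication_clique_less:
  assumes "finite S" "\<forall>K\<in>{K. clique S E K}. stable_set S E (f K) \<and> f K \<inter> K = {}"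
    and C: "clique (SIGMA K:{K. clique S E K}. f K) (replication snd E) C"
  shows "card C < card {K. clique S E K}"
proof -
  let ?\<K> = "{K. clique S E K}"
  have CW: "C \<subseteq> (SIGMA K:?\<K>. f K)" using C by (simp add: clique_def)
  have "snd ` (SIGMA K:?\<K>. f K) \<subseteq> S" using assms(2) by (force simp: stable_set_def)
  then have "snd ` C \<in> ?\<K>"
    using C by (auto intro: clique_image simp: replication_def)
  have "inj_on fst C"
  proof (rule inj_onI, rule ccontr)
    fix a b assume ab: "a \<in> C" "b \<in> C" "fst a = fst b" "a \<noteq> b"
    then have "snd a \<noteq> snd b" by (simp add: prod_eq_iff)
    moreover have "replication snd E a b" using C ab by (simp add: clique_def)
    ultimately have "E (snd a) (snd b)" by (simp add: replication_def)
    moreover have "snd a \<in> f (fst a)" "snd b \<in> f (fst a)" "fst a \<in> ?\<K>"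
      using ab CW by auto
    ultimately show False using assms(2) by (auto simp: stable_set_def)
  qed
  moreover have "fst ` C \<subseteq> ?\<K> - {snd ` C}"
  proof
    fix K assume "K \<in> fst ` C"
    then obtain v where "(K, v) \<in> C" by force
    then have "K \<in> ?\<K>" "v \<in> f K" "v \<in> snd ` C" using CW by force+
    then show "K \<in> ?\<K> - {snd ` C}" using assms(2) by blast
  qed
  ultimately have "card C \<le> card (?\<K> - {snd ` C})"
    using finite_cliques[OF assms(1)] by (metis card_image card_mono finite_Diff)
  also have "\<dots> < card ?\<K>"
    using finite_cliques[OF assms(1)] \<open>snd ` C \<in> ?\<K>\<close> by (rule card_Diff1_less)
  finally show ?thesis .
qed

text \<open>If every clique \<open>K\<close> were avoided by a maximum stable set \<open>f K\<close>, replicate each vertex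
  once for every \<open>K\<close> with \<open>v \<in> f K\<close>. The resulting graph has \<open>N \<alpha>\<close> vertices, where \<open>N\<close> is the
  number of cliques, but clique number below \<open>N\<close> and stability number at most \<open>\<alpha>\<close>, so it is
  not \<open>\<omega>\<close>-colourable.\<close>

lemma no_maximum_stable_sets_avoiding_all_cliques:
  assumes "graph S E" "omega_colourable S E" "S \<noteq> {}"
    and f: "\<forall>K\<in>{K. clique S E K}.
      stable_set S E (f K) \<and> card (f K) = stability_number S E \<and> f K \<inter> K = {}"
  shows False
proof -
  define \<alpha> where "\<alpha> = stability_number S E"
  define N where "N = card {K. clique S E K}"
  define W where "W = (SIGMA K:{K. clique S E K}. f K)"
  have "finite S" using assms(1) by (simp add: graph_def)
  have f_sub: "f K \<subseteq> S" if "clique S E K" for K using f that by (simp add: stable_set_def)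
  have "snd ` W \<subseteq> S" using f_sub by (force simp: W_def)
  have fin: "finite {K. clique S E K}" "\<forall>K\<in>{K. clique S E K}. finite (f K)"
    using finite_cliques[OF \<open>finite S\<close>] \<open>finite S\<close> f_sub by (auto intro: finite_subset)
  then have "finite W" unfolding W_def by (intro finite_SigmaI) auto
  have "card W = (\<Sum>K\<in>{K. clique S E K}. card (f K))"
    unfolding W_def using fin by (rule card_SigmaI)
  also have "\<dots> = N * \<alpha>" using f by (simp add: N_def \<alpha>_def)
  finally have "card W = N * \<alpha>" .
  have "colourable W (replication snd E) (N - 1)"
  proof (rule omega_colourableD)
    show "omega_colourable W (replication snd E)"
      using assms(1,2) \<open>finite W\<close> \<open>snd ` W \<subseteq> S\<close> by (rule omega_colourable_replication)
    fix C assume "clique W (replication snd E) C"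
    then have "card C < N"
      unfolding N_def W_def using \<open>finite S\<close> f by (intro card_replication_clique_less) auto
    then show "card C \<le> N - 1" by simp
  qed
  then have "card W \<le> (N - 1) * \<alpha>"
    unfolding \<alpha>_def
    by (rule card_le_colours_mult_stability_number[OF assms(1) \<open>finite W\<close> \<open>snd ` W \<subseteq> S\<close>])
  moreover obtain v where "v \<in> S" using assms(3) by blast
  then have "stable_set S E {v}" using assms(1) by (simp add: stable_set_def graph_def)
  then have "\<alpha> \<ge> 1" using card_le_stability_number[OF \<open>finite S\<close>] by (fastforce simp: \<alpha>_def)
  moreover have "N \<ge> 1"
    using finite_cliques[OF \<open>finite S\<close>, of E] by (auto simp: N_def Suc_le_eq card_gt_0_iff clique_def)
  ultimately show False using \<open>card W = N * \<alpha>\<close> by (cases N) auto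
qed

lemma clique_meeting_all_maximum_stable_sets:
  assumes "graph S E" "omega_colourable S E" "S \<noteq> {}"
  obtains K where "clique S E K"
    "\<And>I. stable_set S E I \<Longrightarrow> card I = stability_number S E \<Longrightarrow> I \<inter> K \<noteq> {}"
proof -
  have "\<exists>K. clique S E K \<and>
      (\<forall>I. stable_set S E I \<and> card I = stability_number S E \<longrightarrow> I \<inter> K \<noteq> {})"
  proof (rule ccontr)
    assume "\<not> ?thesis"
    then have "\<forall>K\<in>{K. clique S E K}. \<exists>I.
        stable_set S E I \<and> card I = stability_number S E \<and> I \<inter> K = {}"
      by blast
    then obtain f where "\<forall>K\<in>{K. clique S E K}.
        stable_set S E (f K) \<and> card (f K) = stability_number S E \<and> f K \<inter> K = {}"
      by (rule bchoice[elim_format]) blast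
    with assms show False by (rule no_maximum_stable_sets_avoiding_all_cliques)
  qed
  then show thesis using that by blast
qed

lemma stability_number_Diff_less:
  assumes "finite S"
    and meets: "\<And>I. stable_set S E I \<Longrightarrow> card I = stability_number S E \<Longrightarrow> I \<inter> K \<noteq> {}"
  shows "stability_number (S - K) E < stability_number S E"
proof -
  obtain I0 where I0: "stable_set S E I0" "card I0 = stability_number S E"
    using maximum_stable_set[OF assms(1)] by blast
  have "finite I0"
    using I0(1) assms(1) unfolding stable_set_def by (blast intro: finite_subset)
  moreover have "I0 \<noteq> {}" using meets[OF I0] by auto
  ultimately have "stability_number S E \<ge> 1"
    using I0(2) card_gt_0_iff[of I0] by linarith
  moreover have "stability_number (S - K) E \<le> stability_number S E - 1"
  proof (rule stability_number_leI)
    show "finite (S - K)" using assms(1) by simp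
    fix I assume "stable_set (S - K) E I"
    then have "stable_set S E I" "I \<inter> K = {}" by (auto simp: stable_set_def)
    then show "card I \<le> stability_number S E - 1"
      using meets card_le_stability_number[OF assms(1)] by fastforce
  qed
  ultimately show ?thesis by linarith
qed

lemma clique_cover:
  assumes "graph S E" "omega_colourable S E"
  shows "\<exists>\<C>. finite \<C> \<and> card \<C> \<le> stability_number S E \<and> (\<forall>C\<in>\<C>. clique S E C) \<and> S \<subseteq> \<Union>\<C>"
  using assms
proof (induction "card S" arbitrary: S rule: less_induct)
  case less
  show ?case
  proof (cases "S = {}")
    case True
    then show ?thesis by (intro exI[of _ "{}"]) simp
  next
    case False
    have "finite S" using less.prems(1) by (simp add: graph_def)
    obtain K where K: "clique S E K"
      "\<And>I. stable_set S E I \<Longrightarrow> card I = stability_number S E \<Longrightarrow> I \<inter> K \<noteq> {}"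
      using clique_meeting_all_maximum_stable_sets[OF less.prems False] by blast
    have less_\<alpha>: "stability_number (S - K) E < stability_number S E"
      using \<open>finite S\<close> K(2) by (rule stability_number_Diff_less)
    then have "S - K \<subset> S" by auto
    then have "card (S - K) < card S" using \<open>finite S\<close> by (rule psubset_card_mono[rotated])
    moreover have "graph (S - K) E" using less.prems(1) Diff_subset by (rule graph_subset)
    moreover have "omega_colourable (S - K) E"
      using less.prems(2) Diff_subset by (rule omega_colourable_subset)
    ultimately have "\<exists>\<C>. finite \<C> \<and> card \<C> \<le> stability_number (S - K) E
        \<and> (\<forall>C\<in>\<C>. clique (S - K) E C) \<and> S - K \<subseteq> \<Union>\<C>"
      by (rule less.hyps)
    then obtain \<C> where \<C>: "finite \<C>" "card \<C> \<le> stability_number (S - K) E"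
      "\<forall>C\<in>\<C>. clique (S - K) E C" "S - K \<subseteq> \<Union>\<C>"
      by blast
    have "card (insert K \<C>) \<le> Suc (card \<C>)"
      using \<C>(1) by (simp add: card_insert_if)
    then have "card (insert K \<C>) \<le> stability_number S E"
      using \<C>(2) less_\<alpha> by linarith
    moreover have "\<forall>C\<in>insert K \<C>. clique S E C"
      using K(1) \<C>(3) by (auto intro: clique_subset)
    ultimately show ?thesis
      using \<C>(1,4) by (intro exI[of _ "insert K \<C>"]) auto
  qed
qed

section \<open>A fractional clique cover of weight at most \<open>cost V\<close>\<close>

lemma nonneg_rat_common_denominator:
  fixes w :: "'a \<Rightarrow> rat"
  assumes "finite V" "\<forall>v\<in>V. w v \<ge> 0"
  obtains d :: nat and m :: "'a \<Rightarrow> nat"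
  where "d > 0" "\<forall>v\<in>V. w v * of_nat d = of_nat (m v)"
proof -
  define q where "q v = snd (quotient_of (w v))" for v
  define z where "z v = fst (quotient_of (w v)) * (\<Prod>u\<in>V - {v}. q u)" for v
  define D where "D = (\<Prod>u\<in>V. q u)"
  have q_pos: "q v > 0" for v by (simp add: q_def quotient_of_denom_pos')
  have "D > 0" unfolding D_def by (rule prod_pos) (rule q_pos)
  have scaled: "w v * of_int D = of_int (z v)" if "v \<in> V" for v
  proof -
    define a where "a = fst (quotient_of (w v))"
    have "w v = of_int a / of_int (q v)"
      unfolding q_def a_def by (rule quotient_of_div) simp
    then have "w v * of_int (q v) = of_int a" using q_pos[of v] by simp
    moreover have "D = q v * (\<Prod>u\<in>V - {v}. q u)"
      unfolding D_def using assms(1) that by (rule prod.remove)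
    ultimately show ?thesis by (simp add: z_def a_def[symmetric] mult.assoc[symmetric])
  qed
  have "w v * of_nat (nat D) = of_nat (nat (z v))" if "v \<in> V" for v
  proof -
    have "0 \<le> w v * of_int D" using assms(2) that \<open>D > 0\<close> by simp
    then have "z v \<ge> 0" using scaled[OF that] by simp
    then show ?thesis using scaled[OF that] \<open>D > 0\<close> by simp
  qed
  then show thesis using \<open>D > 0\<close> by (intro that[of "nat D" "\<lambda>v. nat (z v)"]) auto
qed

lemma lp_feasible_of_clique_family:
  fixes \<C> :: "'c set" and h :: "'c \<Rightarrow> 'a set" and w :: "'a \<Rightarrow> rat"
  assumes "finite V" "finite \<C>" "\<forall>C\<in>\<C>. clique V E (h C)" "d > 0"
    and cover: "\<forall>v\<in>V. w v * of_nat d \<le> of_nat (card {C\<in>\<C>. v \<in> h C})"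
  obtains y where "lp_feasible V E w y" "sum y (maximal_cliques V E) * of_nat d = of_nat (card \<C>)"
proof -
  let ?M = "maximal_cliques V E"
  have "\<forall>C\<in>\<C>. \<exists>Q. Q \<in> ?M \<and> h C \<subseteq> Q"
    using assms(1,3) clique_extends_to_maximal_clique by metis
  then obtain g where g: "\<forall>C\<in>\<C>. g C \<in> ?M \<and> h C \<subseteq> g C"
    by (rule bchoice[elim_format]) blast
  define y where "y Q = of_nat (card {C\<in>\<C>. g C = Q}) / (of_nat d :: rat)" for Q
  have sum_y: "sum y T * of_nat d = of_nat (card {C\<in>\<C>. g C \<in> T})" if "finite T" for T
  proof -
    have "{C\<in>\<C>. g C \<in> T} = (\<Union>Q\<in>T. {C\<in>\<C>. g C = Q})" by blast
    then have "card {C\<in>\<C>. g C \<in> T} = (\<Sum>Q\<in>T. card {C\<in>\<C>. g C = Q})"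
      using that assms(2) by (auto intro: card_UN_disjoint)
    then show ?thesis
      using \<open>d > 0\<close> by (simp add: y_def sum_divide_distrib[symmetric])
  qed
  have "finite ?M" using assms(1) by (rule finite_maximal_cliques)
  have "lp_feasible V E w y"
    unfolding lp_feasible_def
  proof (intro conjI ballI)
    fix v assume "v \<in> V"
    have "{C\<in>\<C>. v \<in> h C} \<subseteq> {C\<in>\<C>. g C \<in> {Q\<in>?M. v \<in> Q}}" using g by blast
    then have "card {C\<in>\<C>. v \<in> h C} \<le> card {C\<in>\<C>. g C \<in> {Q\<in>?M. v \<in> Q}}"
      using assms(2) by (intro card_mono) simp_all
    then have "w v * of_nat d \<le> of_nat (card {C\<in>\<C>. g C \<in> {Q\<in>?M. v \<in> Q}})"
      using cover \<open>v \<in> V\<close> by (meson of_nat_le_iff order_trans)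
    also have "\<dots> = sum y {Q\<in>?M. v \<in> Q} * of_nat d"
      using sum_y \<open>finite ?M\<close> by simp
    finally show "w v \<le> sum y {Q\<in>?M. v \<in> Q}"
      using \<open>d > 0\<close> by simp
  qed (simp add: y_def)
  moreover have "{C\<in>\<C>. g C \<in> ?M} = \<C>" using g by blast
  then have "sum y ?M * of_nat d = of_nat (card \<C>)"
    using sum_y[OF \<open>finite ?M\<close>] by simp
  ultimately show thesis by (rule that)
qed

definition stable_replication :: "('a \<Rightarrow> 'a \<Rightarrow> bool) \<Rightarrow> 'a \<times> nat \<Rightarrow> 'a \<times> nat \<Rightarrow> bool" where
  "stable_replication E x y \<longleftrightarrow> E (fst x) (fst y)"

lemma stable_replication_iff:
  assumes "graph V E" "x \<in> W" "y \<in> W" "fst ` W \<subseteq> V"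
  shows "stable_replication E x y \<longleftrightarrow> fst x \<noteq> fst y \<and> E (fst x) (fst y)"
  using assms by (auto simp: stable_replication_def graph_def)

lemma graph_stable_replication:
  assumes "graph V E" "finite W" "fst ` W \<subseteq> V"
  shows "graph W (stable_replication E)"
  unfolding graph_def
proof (intro conjI ballI impI)
  fix a b assume "a \<in> W" "b \<in> W" "stable_replication E a b"
  then show "stable_replication E b a"
    using assms(1,3) by (simp add: stable_replication_def graph_def image_subset_iff)
qed (use assms stable_replication_iff in blast)+

lemma card_stable_set_stable_replication_le:
  fixes w :: "'a \<Rightarrow> rat" and m :: "'a \<Rightarrow> nat"
  assumes "finite V" "\<forall>v\<in>V. w v * of_nat d = of_nat (m v)"
    and I: "stable_set (SIGMA v:V. {..<m v}) (stable_replication E) I"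
  shows "of_nat (card I) \<le> cost E w V * of_nat d"
proof -
  let ?J = "fst ` I"
  have I_sub: "I \<subseteq> (SIGMA v:V. {..<m v})" using I by (simp add: stable_set_def)
  then have "?J \<subseteq> V" by force
  then have "finite ?J" using assms(1) by (rule finite_subset)
  have "stable_set V E ?J"
    using I \<open>?J \<subseteq> V\<close> by (auto simp: stable_set_def stable_replication_def)
  have "I \<subseteq> (SIGMA v:?J. {..<m v})" using I_sub by force
  then have "card I \<le> card (SIGMA v:?J. {..<m v})"
    using \<open>finite ?J\<close> by (intro card_mono) auto
  also have "\<dots> = (\<Sum>v\<in>?J. m v)" using \<open>finite ?J\<close> by simp
  finally have "of_nat (card I) \<le> (\<Sum>v\<in>?J. (of_nat (m v) :: rat))"
    by (metis of_nat_le_iff of_nat_sum)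
  also have "\<dots> = sum w ?J * of_nat d"
    using assms(2) \<open>?J \<subseteq> V\<close> by (simp add: sum_distrib_right subset_iff)
  also have "\<dots> \<le> cost E w V * of_nat d"
    using stable_weight_le_cost[OF assms(1) \<open>stable_set V E ?J\<close>] by (simp add: mult_right_mono)
  finally show ?thesis .
qed

lemma card_stable_set_le_cover:
  assumes "finite \<C>" "\<forall>C\<in>\<C>. clique S E C" "I \<subseteq> \<Union>\<C>" "stable_set S E I"
  shows "card I \<le> card {C\<in>\<C>. C \<inter> I \<noteq> {}}"
proof -
  have "\<forall>x\<in>I. \<exists>C. C \<in> \<C> \<and> x \<in> C" using assms(3) by blast
  then obtain g where g: "\<forall>x\<in>I. g x \<in> \<C> \<and> x \<in> g x"
    by (rule bchoice[elim_format]) blast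
  have "inj_on g I"
  proof (rule inj_onI, rule ccontr)
    fix x y assume "x \<in> I" "y \<in> I" "g x = g y" "x \<noteq> y"
    then have "g x \<in> \<C>" "x \<in> g x" "y \<in> g x" using g by metis+
    then have "E x y" using assms(2) \<open>x \<noteq> y\<close> unfolding clique_def by blast
    then show False using \<open>x \<in> I\<close> \<open>y \<in> I\<close> assms(4) by (simp add: stable_set_def)
  qed
  moreover have "g ` I \<subseteq> {C\<in>\<C>. C \<inter> I \<noteq> {}}" using g by blast
  ultimately show ?thesis using assms(1) by (simp add: card_inj_on_le)
qed

lemma copies_le_card_covering_cliques:
  assumes "finite \<C>" "\<forall>C\<in>\<C>. clique W (stable_replication E) C" "W \<subseteq> \<Union>\<C>"
    and "{v} \<times> {..<n} \<subseteq> W" "\<not> E v v"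
  shows "n \<le> card {C\<in>\<C>. v \<in> fst ` C}"
proof -
  let ?I = "{v} \<times> {..<n}"
  have "stable_set W (stable_replication E) ?I"
    using assms(4,5) by (auto simp: stable_set_def stable_replication_def)
  then have "card ?I \<le> card {C\<in>\<C>. C \<inter> ?I \<noteq> {}}"
    using assms(1-4) by (intro card_stable_set_le_cover) auto
  also have "\<dots> \<le> card {C\<in>\<C>. v \<in> fst ` C}"
    using assms(1) by (intro card_mono) force+
  finally show ?thesis by simp
qed

lemma stable_replication_clique_cover:
  fixes w :: "'a \<Rightarrow> rat"
  assumes "graph V E" "omega_colourable V E" "\<forall>v\<in>V. w v * of_nat d = of_nat (m v)"
  defines "W \<equiv> SIGMA v:V. {..<m v}"
  obtains \<C> where "finite \<C>" "\<forall>C\<in>\<C>. clique W (stable_replication E) C" "W \<subseteq> \<Union>\<C>"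
    "of_nat (card \<C>) \<le> cost E w V * of_nat d"
proof -
  let ?F = "stable_replication E"
  have "finite V" using assms(1) by (simp add: graph_def)
  then have "finite W" "fst ` W \<subseteq> V" by (auto simp: W_def)
  have "graph W ?F" using assms(1) \<open>finite W\<close> \<open>fst ` W \<subseteq> V\<close> by (rule graph_stable_replication)
  moreover have "omega_colourable W ?F"
    using assms(2) \<open>fst ` W \<subseteq> V\<close> stable_replication_iff[OF assms(1) _ _ \<open>fst ` W \<subseteq> V\<close>]
    by (rule omega_colourable_pullback)
  ultimately have "\<exists>\<C>. finite \<C> \<and> card \<C> \<le> stability_number W ?F
      \<and> (\<forall>C\<in>\<C>. clique W ?F C) \<and> W \<subseteq> \<Union>\<C>"
    by (rule clique_cover)
  then obtain \<C> where \<C>: "finite \<C>" "card \<C> \<le> stability_number W ?F"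
    "\<forall>C\<in>\<C>. clique W ?F C" "W \<subseteq> \<Union>\<C>"
    by blast
  obtain I where I: "stable_set W ?F I" "card I = stability_number W ?F"
    using maximum_stable_set[OF \<open>finite W\<close>] by blast
  have "of_nat (card \<C>) \<le> (of_nat (card I) :: rat)" using \<C>(2) I(2) by simp
  also have "\<dots> \<le> cost E w V * of_nat d"
    using I(1) unfolding W_def by (rule card_stable_set_stable_replication_le[OF \<open>finite V\<close> assms(3)])
  finally show thesis using \<C>(1,3,4) that by blast
qed

text \<open>Clearing denominators, \<open>w = m / d\<close>. The cliques covering the graph in which every
  vertex \<open>v\<close> has \<open>m v\<close> non-adjacent copies project to cliques of \<open>V\<close> covering \<open>v\<close> at least
  \<open>m v\<close> times; weighting each of them by \<open>1 / d\<close> gives the LP solution.\<close>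

lemma lp_feasible_with_sum_le_cost:
  fixes w :: "'a \<Rightarrow> rat"
  assumes "graph V E" "omega_colourable V E" "\<forall>v\<in>V. w v \<ge> 0"
  obtains y where "lp_feasible V E w y" "sum y (maximal_cliques V E) \<le> cost E w V"
proof -
  have "finite V" using assms(1) by (simp add: graph_def)
  obtain d m where d: "d > 0" "\<forall>v\<in>V. w v * of_nat d = of_nat (m v)"
    using nonneg_rat_common_denominator[OF \<open>finite V\<close> assms(3)] by blast
  define W where "W = (SIGMA v:V. {..<m v})"
  obtain \<C> where \<C>: "finite \<C>" "\<forall>C\<in>\<C>. clique W (stable_replication E) C" "W \<subseteq> \<Union>\<C>"
    "of_nat (card \<C>) \<le> cost E w V * of_nat d"
    using stable_replication_clique_cover[OF assms(1,2) d(2)] unfolding W_def by blast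
  have "fst ` W \<subseteq> V" by (auto simp: W_def)
  then have "\<forall>C\<in>\<C>. clique V E (fst ` C)"
    using \<C>(2) stable_replication_iff[OF assms(1) _ _ \<open>fst ` W \<subseteq> V\<close>]
    by (blast intro: clique_image)
  moreover have "\<forall>v\<in>V. w v * of_nat d \<le> of_nat (card {C\<in>\<C>. v \<in> fst ` C})"
  proof
    fix v assume "v \<in> V"
    then have "{v} \<times> {..<m v} \<subseteq> W" "\<not> E v v"
      using assms(1) by (auto simp: W_def graph_def)
    then have "m v \<le> card {C\<in>\<C>. v \<in> fst ` C}"
      by (rule copies_le_card_covering_cliques[OF \<C>(1-3)])
    then show "w v * of_nat d \<le> of_nat (card {C\<in>\<C>. v \<in> fst ` C})"
      using d(2) \<open>v \<in> V\<close> by simp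
  qed
  ultimately obtain y where y: "lp_feasible V E w y"
    "sum y (maximal_cliques V E) * of_nat d = of_nat (card \<C>)"
    using lp_feasible_of_clique_family[OF \<open>finite V\<close> \<C>(1) _ d(1)] by blast
  then have "sum y (maximal_cliques V E) * of_nat d \<le> cost E w V * of_nat d"
    using \<C>(4) by simp
  then have "sum y (maximal_cliques V E) \<le> cost E w V"
    using d(1) by (simp add: mult_le_cancel_right)
  with y(1) show thesis by (rule that)
qed

section \<open>Weak duality\<close>

lemma lp_feasible_cost_le_money:
  assumes "finite V" "lp_feasible V E w y" "S \<subseteq> V"
  shows "cost E w S \<le> money V E y S"
proof -
  let ?M = "maximal_cliques V E"
  let ?M_at = "\<lambda>v. {Q\<in>?M. v \<in> Q}"
  have nonneg: "\<forall>Q\<in>?M. y Q \<ge> 0" and cover: "\<forall>v\<in>V. w v \<le> sum y (?M_at v)"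
    using assms(2) by (simp_all add: lp_feasible_def)
  have "finite S" "finite ?M"
    using assms(1,3) finite_subset finite_maximal_cliques by blast+
  obtain I where I: "stable_set S E I" "cost E w S = sum w I"
    using maximum_weight_stable_set[OF \<open>finite S\<close>] by blast
  have "I \<subseteq> S" using I(1) by (simp add: stable_set_def)
  then have "finite I" using \<open>finite S\<close> by (rule finite_subset)
  have disjoint: "?M_at u \<inter> ?M_at v = {}" if "u \<in> I" "v \<in> I" "u \<noteq> v" for u v
  proof -
    have "\<not> E u v" using that(1,2) I(1) by (simp add: stable_set_def)
    moreover have "clique V E Q" if "Q \<in> ?M" for Q using that by (simp add: maximal_cliques_def)
    ultimately show ?thesis using \<open>u \<noteq> v\<close> unfolding clique_def by blast
  qed
  have "cost E w S \<le> (\<Sum>v\<in>I. sum y (?M_at v))"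
    unfolding I(2) using cover \<open>I \<subseteq> S\<close> assms(3) by (intro sum_mono) blast
  also have "\<dots> = sum y (\<Union>v\<in>I. ?M_at v)"
    using \<open>finite I\<close> \<open>finite ?M\<close> disjoint by (subst sum.UNION_disjoint) auto
  also have "\<dots> \<le> sum y {Q\<in>?M. Q \<inter> S \<noteq> {}}"
    using \<open>finite ?M\<close> nonneg \<open>I \<subseteq> S\<close> by (intro sum_mono2) auto
  finally show ?thesis unfolding money_def .
qed

lemma money_le_sum:
  assumes "finite V" "\<forall>Q\<in>maximal_cliques V E. y Q \<ge> 0"
  shows "money V E y S \<le> sum y (maximal_cliques V E)"
  unfolding money_def using assms finite_maximal_cliques by (intro sum_mono2) auto

lemma lp_feasible_cost_le_sum:
  assumes "finite V" "lp_feasible V E w y"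
  shows "cost E w V \<le> sum y (maximal_cliques V E)"
  using lp_feasible_cost_le_money[OF assms order_refl] money_le_sum[OF assms(1)] assms(2)
  by (meson lp_feasible_def order_trans)

lemma core_imputation_iff:
  assumes "graph V E"
  shows "core_imputation V E w y \<longleftrightarrow>
    lp_feasible V E w y \<and> sum y (maximal_cliques V E) = cost E w V"
proof
  assume core: "core_imputation V E w y"
  have "w v \<le> sum y {Q\<in>maximal_cliques V E. v \<in> Q}" if "v \<in> V" for v
  proof -
    have "stable_set {v} E {v}" using assms that by (simp add: graph_def stable_set_def)
    then have "w v \<le> cost E w {v}" using stable_weight_le_cost[of "{v}" E "{v}" w] by simp
    also have "\<dots> \<le> money V E y {v}" using core that by (simp add: core_imputation_def)
    also have "money V E y {v} = sum y {Q\<in>maximal_cliques V E. v \<in> Q}"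
      unfolding money_def by (rule sum.cong) auto
    finally show ?thesis .
  qed
  then show "lp_feasible V E w y \<and> sum y (maximal_cliques V E) = cost E w V"
    using core by (simp add: core_imputation_def imputation_def lp_feasible_def)
next
  assume lp: "lp_feasible V E w y \<and> sum y (maximal_cliques V E) = cost E w V"
  moreover have "finite V" using assms by (simp add: graph_def)
  ultimately have "\<forall>S\<subseteq>V. cost E w S \<le> money V E y S"
    using lp_feasible_cost_le_money by blast
  then show "core_imputation V E w y"
    using lp by (simp add: core_imputation_def imputation_def lp_feasible_def)
qed

lemma lp_optimal_iff:
  assumes "graph V E" "perfect V E" "\<forall>v\<in>V. w v \<ge> 0"
  shows "lp_optimal V E w y \<longleftrightarrow>
    lp_feasible V E w y \<and> sum y (maximal_cliques V E) = cost E w V"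
proof -
  have weak: "cost E w V \<le> sum y' (maximal_cliques V E)" if "lp_feasible V E w y'" for y'
    using assms(1) that by (intro lp_feasible_cost_le_sum) (simp_all add: graph_def)
  obtain y0 where y0: "lp_feasible V E w y0" "sum y0 (maximal_cliques V E) \<le> cost E w V"
    by (rule lp_feasible_with_sum_le_cost[OF assms(1) perfect_imp_omega_colourable[OF assms(1,2)] assms(3)])
  show ?thesis
  proof
    assume "lp_optimal V E w y"
    then have "lp_feasible V E w y" "sum y (maximal_cliques V E) \<le> sum y0 (maximal_cliques V E)"
      using y0(1) unfolding lp_optimal_def by blast+
    then show "lp_feasible V E w y \<and> sum y (maximal_cliques V E) = cost E w V"
      using weak[of y] y0(2) by simp
  next
    assume "lp_feasible V E w y \<and> sum y (maximal_cliques V E) = cost E w V"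
    then show "lp_optimal V E w y" unfolding lp_optimal_def using weak by simp
  qed
qed

theorem theorem17:
  fixes V :: "'a set" and E :: "'a \<Rightarrow> 'a \<Rightarrow> bool"
    and w :: "'a \<Rightarrow> rat" and y :: "'a set \<Rightarrow> rat"
  assumes "graph V E"
    and "perfect V E"
    and "\<forall>v\<in>V. w v \<ge> 0"
    and "\<forall>Q\<in>maximal_cliques V E. y Q \<ge> 0"
  shows "core_imputation V E w y \<longleftrightarrow> lp_optimal V E w y"
  using core_imputation_iff[OF assms(1)] lp_optimal_iff[OF assms(1-3)] by simp

end
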